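(* The cardinality $|\mathcal{D}|$ of the collection of drawable sets is strictly less than the cardinality of the collection of convex subsets of $\mathbb{R}^2$. In particular, not every convex subset of $\mathbb{R}^2$ is drawable (indeed most are not).
   Context: For $A\subseteq\mathbb{R}^2$ let $N(A)=\{x\in\mathbb{R}^2: |x-a|<1 \text{ for some } a\in A\}$. Let $\mathcal{D}_1=\{N(A_1): A_1\subseteq\mathbb{R}^2\}$ and for $n\ge 2$ let $\mathcal{D}_n=\{D\cup N(A_n): D\in\mathcal{D}_{n-1}, A_n\subseteq\mathbb{R}^2\}$ if $n$ is odd and $\mathcal{D}_n=\{D\setminus N(A_n): D\in\mathcal{D}_{n-1}, A_n\subseteq\mathbb{R}^2\}$ if $n$ is even. A set is drawable if it lies in $\mathcal{D}=\bigcup_{n\ge1}\mathcal{D}_n$. *)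

theory Defs
  imports "HOL-Analysis.Analysis"
begin

definition nbhd :: "(real^2) set \<Rightarrow> (real^2) set" where
  "nbhd A = {x. \<exists>a\<in>A. dist x a < 1}"

text \<open>drawable_level n is the family D_n of the paper (D_0 is empty and unused).\<close>
primrec drawable_level :: "nat \<Rightarrow> (real^2) set set" where
  "drawable_level 0 = {}"
| "drawable_level (Suc n) =
     (if n = 0 then {nbhd A | A. True}
      else if odd (Suc n) then {D \<union> nbhd A | D A. D \<in> drawable_level n}
      else {D - nbhd A | D A. D \<in> drawable_level n})"

definition drawable :: "(real^2) set \<Rightarrow> bool" where
  "drawable S \<longleftrightarrow> (\<exists>n\<ge>1. S \<in> drawable_level n)"

end

(* Every drawable set is obtained from finitely many open sets by unions and differences.
   The plane, being second countable, has only continuum many open sets, hence only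
   continuum many drawable sets.  On the other hand, the open unit disc together with an
   arbitrary subset of the unit circle is convex, and the circle has the cardinality of
   the continuum, so there are at least 2^continuum convex sets; Cantor's theorem
   separates the two cardinals. *)
theory Submission
  imports Defs
begin

unbundle cardinal_syntax

lemma card_of_image_Times_ordLeq_infinite:
  assumes "infinite C" "|A| \<le>o |C|" "|B| \<le>o |C|"
  shows "|(\<lambda>(a, b). f a b) ` (A \<times> B)| \<le>o |C|"
  using card_of_image card_of_Times_ordLeq_infinite_Field[of "|C|" A B] assms
  by (metis Field_card_of card_of_Card_order ordLeq_transitive)

lemma card_of_open_sets_le_reals:
  "|{S :: 'a::euclidean_space set. open S}| \<le>o |UNIV :: real set|"
proof -
  obtain B :: "nat \<Rightarrow> 'a set" where "\<And>S. open S \<Longrightarrow> \<exists>k. S = \<Union>{B n |n. n \<in> k}"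
    using univ_second_countable_sequence by metis
  then have "{S. open S} \<subseteq> (\<lambda>k. \<Union>{B n |n. n \<in> k}) ` UNIV"
    by blast
  then have "|{S :: 'a set. open S}| \<le>o |UNIV :: nat set set|"
    by (meson card_of_image card_of_mono1 ordLeq_transitive)
  moreover have "|UNIV :: nat set set| =o |UNIV :: real set|"
    using eqpoll_iff_card_of_ordIso nat_sets_eqpoll_reals by blast
  ultimately show ?thesis
    by (rule ordLeq_ordIso_trans)
qed

lemma open_nbhd: "open (nbhd A)"
proof -
  have "nbhd A = (\<Union>a\<in>A. ball a 1)"
    by (auto simp: nbhd_def dist_commute)
  then show ?thesis
    by auto
qed

lemma drawable_level_Suc_subset:
  assumes "n \<noteq> 0"
  shows "drawable_level (Suc n) \<subseteq>
    (\<lambda>(D, U). if odd (Suc n) then D \<union> U else D - U) ` (drawable_level n \<times> {U. open U})"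
  using assms open_nbhd by (auto simp: image_iff)

lemma card_of_drawable_level_le_reals: "|drawable_level n| \<le>o |UNIV :: real set|"
proof (induction n)
  case 0
  then show ?case
    by (simp add: card_of_empty)
next
  case (Suc n)
  show ?case
  proof (cases "n = 0")
    case True
    then have "drawable_level (Suc n) \<subseteq> {U. open U}"
      using open_nbhd by auto
    then show ?thesis
      using card_of_mono1 card_of_open_sets_le_reals ordLeq_transitive by blast
  next
    case False
    have "|(\<lambda>(D, U). if odd (Suc n) then D \<union> U else D - U) ` (drawable_level n \<times> {U. open U})|
        \<le>o |UNIV :: real set|"
      using Suc.IH card_of_open_sets_le_reals
      by (intro card_of_image_Times_ordLeq_infinite) (simp_all add: infinite_UNIV_char_0)
    then show ?thesis
      using drawable_level_Suc_subset[OF False] card_of_mono1 ordLeq_transitive by blast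
  qed
qed

lemma card_of_drawable_le_reals: "|{S. drawable S}| \<le>o |UNIV :: real set|"
proof -
  have "{S. drawable S} \<subseteq> (\<Union>n. drawable_level n)"
    by (auto simp: drawable_def)
  moreover have "|\<Union>n. drawable_level n| \<le>o |UNIV :: real set|"
    using card_of_drawable_level_le_reals infinite_UNIV_char_0 infinite_iff_card_of_nat
    by (intro card_of_UNION_ordLeq_infinite) auto
  ultimately show ?thesis
    using card_of_mono1 ordLeq_transitive by blast
qed

lemma vector_1_neq_0: "vector [1, t] \<noteq> (0 :: real^2)"
  by (metis vector_2(1) zero_index zero_neq_one)

lemma inj_sgn_vector: "inj (\<lambda>t. sgn (vector [1, t] :: real^2))"
proof (rule injI)
  fix s t :: real
  assume eq: "sgn (vector [1, s] :: real^2) = sgn (vector [1, t])"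
  define ns where "ns = norm (vector [1, s] :: real^2)"
  define nt where "nt = norm (vector [1, t] :: real^2)"
  have "ns \<noteq> 0"
    unfolding ns_def using vector_1_neq_0 by simp
  have "1 / ns = 1 / nt" "s / ns = t / nt"
    using arg_cong[OF eq, of "\<lambda>x. x $ 1"] arg_cong[OF eq, of "\<lambda>x. x $ 2"]
    by (simp_all add: ns_def nt_def sgn_div_norm)
  then have "ns = nt" "s / ns = t / ns"
    by simp_all
  then show "s = t"
    using \<open>ns \<noteq> 0\<close> by simp
qed

lemma inj_on_ball_Un_sphere_subsets: "inj_on (\<lambda>T. ball a r \<union> T) (Pow (sphere a r))"
proof (rule inj_onI)
  fix X Y
  assume "X \<in> Pow (sphere a r)" "Y \<in> Pow (sphere a r)" "ball a r \<union> X = ball a r \<union> Y"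
  moreover have "ball a r \<inter> sphere a r = {}"
    by auto
  ultimately show "X = Y"
    by blast
qed

lemma card_of_Pow_reals_le_convex: "|Pow (UNIV :: real set)| \<le>o |{S :: (real^2) set. convex S}|"
proof -
  define g where "g t = sgn (vector [1, t] :: real^2)" for t
  have g_sphere: "g ` X \<in> Pow (sphere 0 1)" for X
    by (auto simp: g_def norm_sgn vector_1_neq_0)
  have "inj_on (\<lambda>X. ball 0 1 \<union> g ` X) (Pow UNIV)"
  proof (rule inj_onI)
    fix X Y assume "ball 0 1 \<union> g ` X = ball 0 1 \<union> g ` Y"
    then have "g ` X = g ` Y"
      using inj_on_ball_Un_sphere_subsets g_sphere by (metis inj_onD)
    then show "X = Y"
      using inj_sgn_vector by (simp add: g_def inj_image_eq_iff)
  qed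
  moreover have "ball 0 1 \<union> g ` X \<in> {S. convex S}" for X
  proof -
    have "ball 0 1 \<union> g ` X \<subseteq> cball 0 1"
      using g_sphere[of X] ball_subset_cball sphere_cball by blast
    then show ?thesis
      using convex_intermediate_ball[of 0 1 "ball 0 1 \<union> g ` X"] by blast
  qed
  ultimately show ?thesis
    by (metis (no_types, lifting) card_of_ordLeq image_subsetI)
qed

theorem corollary2p3:
  shows "(card_of {S :: (real^2) set. drawable S}, card_of {S :: (real^2) set. convex S}) \<in> ordLess"
  using card_of_drawable_le_reals card_of_Pow card_of_Pow_reals_le_convex
  by (metis ordLeq_ordLess_trans ordLess_ordLeq_trans)

end
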